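(* As formal power series in $z,y$, $$\sum_{p\ge0}\sum_{n\ge p}\mathbb{B}_n^{(-p)}\frac{z^n}{n!}\frac{y^p}{p!}=\exp\big((y+1)(e^z-1)\big).$$
   Context: For an integer $p\ge0$, the poly-Bell numbers $\mathbb{B}_n^{(-p)}$ ($n\ge0$) are defined by the exponential generating function $\sum_{n\ge0}\mathbb{B}_n^{(-p)}\frac{z^n}{n!}=\sum_{n\ge p}\frac{(e^z-1)^n}{(n-p)!}$. *)

theory Defs
  imports "HOL-Analysis.Analysis" "HOL-Computational_Algebra.Formal_Power_Series"
begin

text \<open>Poly-Bell numbers: n! times the coefficient of z^n in the formal sum
  sum_{k >= p} (e^z - 1)^k / (k - p)!, the formal sum being taken coefficientwise
  (only finitely many terms contribute to each coefficient).\<close>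
definition polyBell :: "nat \<Rightarrow> nat \<Rightarrow> real" where
  "polyBell p n = fact n * (\<Sum>\<^sub>\<infinity> k\<in>{p..}. fps_nth ((fps_exp 1 - 1) ^ k) n / fact (k - p))"

text \<open>Bivariate formal power series in z (outer) and y (inner): type real fps fps.
  The coefficient of z^n y^p is fps_nth (fps_nth F n) p.\<close>

definition polyBell_bgf :: "real fps fps" where
  "polyBell_bgf = Abs_fps (\<lambda>n. Abs_fps (\<lambda>p.
      if p \<le> n then polyBell p n / (fact n * fact p) else 0))"

definition exp_series2 :: "real fps fps" where
  "exp_series2 = Abs_fps (\<lambda>k. fps_const (1 / fact k))"

definition y_var :: "real fps fps" where
  "y_var = fps_const fps_X"

end

theory Submission
  imports Defs
begin

unbundle no vec_syntax
unbundle fps_syntax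

text \<open>Expanding the outer exponential, \<open>exp((y+1)(e^z-1))\<close> is the sum over \<open>k\<close> of
  \<open>(y+1)^k (e^z-1)^k / k!\<close>. The coefficient of \<open>y^p\<close> in \<open>(y+1)^k / k!\<close> is
  \<open>1 / (p! (k-p)!)\<close>, so the coefficient of \<open>y^p / p!\<close> is the sum over \<open>k \<ge> p\<close> of
  \<open>(e^z-1)^k / (k-p)!\<close>, which is the generating function of the \<open>p\<close>-th poly-Bell numbers.\<close>

definition fps_lift :: "'a::comm_ring_1 fps \<Rightarrow> 'a fps fps" where
  "fps_lift f = Abs_fps (\<lambda>n. fps_const (f $ n))"

lemma fps_lift_nth [simp]: "fps_lift f $ n = fps_const (f $ n)"
  by (simp add: fps_lift_def)

lemma fps_const_sum: "fps_const (\<Sum>x\<in>A. f x) = (\<Sum>x\<in>A. fps_const (f x))"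
  by (rule fps_ext) (simp add: fps_sum_nth)

lemma fps_lift_one [simp]: "fps_lift 1 = 1"
  by (simp add: fps_eq_iff)

lemma fps_lift_mult: "fps_lift (f * g) = fps_lift f * fps_lift g"
  by (simp add: fps_eq_iff fps_mult_nth fps_const_sum)

lemma fps_lift_power: "fps_lift (f ^ k) = fps_lift f ^ k"
  by (induction k) (simp_all add: fps_lift_mult)

lemma fps_power_nth_eq_0:
  assumes "f $ 0 = 0" and "n < k"
  shows "(f ^ k) $ n = 0"
  using startsby_zero_power_prefix[OF assms(1)] assms(2) by blast

lemma fps_one_plus_X_power_nth:
  "((1 + fps_X :: 'a::field_char_0 fps) ^ k) $ p = of_nat (k choose p)"
  by (simp add: fps_binomial_of_nat [symmetric] binomial_gbinomial)

lemma fps_compose_mult_const_nth: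
  fixes c :: "'a::comm_ring_1"
  shows "(a oo (fps_const c * b)) $ n = (\<Sum>i=0..n. a $ i * c ^ i * (b ^ i) $ n)"
proof -
  have "(fps_const c * b) ^ i = fps_const (c ^ i) * b ^ i" for i
    by (simp add: power_mult_distrib)
  then show ?thesis
    by (simp add: fps_compose_nth mult.assoc)
qed

lemma sum_choose_div_fact:
  fixes c :: "nat \<Rightarrow> 'a::field_char_0"
  assumes "p \<le> n"
  shows "(\<Sum>k=0..n. c k / fact k * of_nat (k choose p)) = (\<Sum>k=p..n. c k / fact (k - p)) / fact p"
proof -
  have "(\<Sum>k=0..n. c k / fact k * of_nat (k choose p)) = (\<Sum>k=p..n. c k / fact k * of_nat (k choose p))"
    by (rule sum.mono_neutral_right) auto
  also have "\<dots> = (\<Sum>k=p..n. c k / fact (k - p) / fact p)"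
    by (rule sum.cong) (auto simp: binomial_fact field_simps)
  finally show ?thesis
    by (simp add: sum_divide_distrib)
qed

lemma polyBell_eq_sum:
  "polyBell p n = fact n * (\<Sum>k=p..n. (fps_exp 1 - 1) ^ k $ n / fact (k - p))"
proof -
  have "(\<Sum>\<^sub>\<infinity>k\<in>{p..}. (fps_exp (1::real) - 1) ^ k $ n / fact (k - p))
      = (\<Sum>\<^sub>\<infinity>k\<in>{p..n}. (fps_exp 1 - 1) ^ k $ n / fact (k - p))"
    by (rule infsum_cong_neutral) (auto simp: fps_power_nth_eq_0)
  then show ?thesis
    by (simp add: polyBell_def)
qed

lemma exp_series2_nth: "exp_series2 $ k = fps_const (1 / fact k)"
  by (simp add: exp_series2_def)

lemma exp_series2_minus_1: "exp_series2 - 1 = fps_lift (fps_exp 1 - 1)"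
  by (simp add: exp_series2_nth fps_eq_iff)

lemma y_var_plus_1: "y_var + 1 = fps_const (1 + fps_X)"
  by (simp add: y_var_def add.commute)

theorem mainTheorem12:
  shows "polyBell_bgf = exp_series2 oo ((y_var + 1) * (exp_series2 - 1))"
proof (intro fps_ext)
  fix n p
  let ?E = "fps_exp (1::real) - 1"
  have rhs: "(exp_series2 oo ((y_var + 1) * (exp_series2 - 1))) $ n $ p
      = (\<Sum>k=0..n. ?E ^ k $ n / fact k * of_nat (k choose p))"
    by (simp add: y_var_plus_1 exp_series2_minus_1 fps_compose_mult_const_nth
        fps_lift_power [symmetric] fps_sum_nth fps_one_plus_X_power_nth exp_series2_nth mult_ac)
  show "polyBell_bgf $ n $ p = (exp_series2 oo ((y_var + 1) * (exp_series2 - 1))) $ n $ p"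
  proof (cases "p \<le> n")
    case True
    have "polyBell_bgf $ n $ p = (\<Sum>k=p..n. ?E ^ k $ n / fact (k - p)) / fact p"
      using True by (simp add: polyBell_bgf_def polyBell_eq_sum)
    also have "\<dots> = (\<Sum>k=0..n. ?E ^ k $ n / fact k * of_nat (k choose p))"
      by (rule sum_choose_div_fact [OF True, symmetric])
    finally show ?thesis
      by (simp only: rhs)
  next
    case False
    then have "(\<Sum>k=0..n. ?E ^ k $ n / fact k * of_nat (k choose p)) = 0"
      by (intro sum.neutral) auto
    with False show ?thesis
      by (simp add: rhs polyBell_bgf_def)
  qed
qed

end
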